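(* Let $\mathbf G_*=(\partial:G_1\to G_0)$ be a crossed module. Then $\mathbf Z_0(\mathbf G_* )$ is a subgroup of $\mathrm{Der}_{G_0}(G_0,G_1)$, and there is a commutative diagram with exact rows $$0\to\mathsf H^0(G_0,\mathbf G_* )\to G_1\xrightarrow{\delta}\mathrm{Der}_{G_0}(G_0,G_1)\to\mathsf H^1(G_0,\mathbf G_* )\to 1,$$ $$0\to\pi_1(\mathbf Z_*(\mathbf G_* ))\to G_1\xrightarrow{\delta}\mathbf Z_0(\mathbf G_* )\to\pi_0(\mathbf Z_*(\mathbf G_* ))\to 1,$$ in which the vertical maps are an isomorphism $\pi_1(\mathbf Z_*(\mathbf G_* ))\cong\mathsf H^0(G_0,\mathbf G_* )$, the identity of $G_1$, the inclusion $\mathbf Z_0(\mathbf G_* )\subseteq\mathrm{Der}_{G_0}(G_0,G_1)$ and an injective map $\pi_0(\mathbf Z_*(\mathbf G_* ))\to\mathsf H^1(G_0,\mathbf G_* )$.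
   Context: A crossed module $\mathbf G_*$: groups $G_1,G_0$, a homomorphism $\partial:G_1\to G_0$ and a left action $(x,a)\mapsto{}^xa$ of $G_0$ on $G_1$ by automorphisms, with $\partial({}^x a)=x\partial(a)x^{-1}$ and ${}^{\partial(b)}a=bab^{-1}$. Commutators $[x,t]=xtx^{-1}t^{-1}$. $\mathsf H^0(G_0,\mathbf G_* )=\{a\in G_1:\partial a=1,\ {}^xa=a\ \forall x\in G_0\}$. $\mathrm{Der}_{G_0}(G_0,G_1)$ is the set of pairs $(g,\gamma)$, $g\in G_0$, $\gamma:G_0\to G_1$ with $\gamma(st)=\gamma(s)\,{}^s\gamma(t)$ and $\partial\gamma(t)=[g,t]$; it is a group under $(g,\gamma)(g',\gamma')=(gg',\ t\mapsto{}^g\gamma'(t)\,\gamma(t))$. $\mathsf H^1(G_0,\mathbf G_* )$ is $\mathrm{Der}_{G_0}(G_0,G_1)$ modulo the relation $(g,\gamma)\sim(g',\gamma')$ iff there is $a\in G_1$ with $g'=\partial(a)^{-1}g$ and $\gamma'(t)=a^{-1}\gamma(t)\,{}^ta$ for all $t$. $\mathbf Z_0(\mathbf G_* )$ is the set of $(x,\xi)\in\mathrm{Der}_{G_0}(G_0,G_1)$ additionally satisfying $\xi(\partial a)={}^xa\,a^{-1}$ for all $a\in G_1$. $\delta(c)=(\partial c,\ t\mapsto c\,({}^tc)^{-1})$; $\pi_1(\mathbf Z_*(\mathbf G_* ))=\ker\delta$, $\pi_0(\mathbf Z_*(\mathbf G_* ))=\mathbf Z_0(\mathbf G_* )/\mathrm{Im}\delta$.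 *)

theory Defs
  imports "HOL-Algebra.Algebra"
begin

definition crossed_module ::
  "('a, 'c) monoid_scheme \<Rightarrow> ('b, 'd) monoid_scheme \<Rightarrow> ('a \<Rightarrow> 'b) \<Rightarrow> ('b \<Rightarrow> 'a \<Rightarrow> 'a) \<Rightarrow> bool" where
  "crossed_module G1 G0 bd act \<longleftrightarrow>
     group G1 \<and> group G0 \<and> bd \<in> hom G1 G0 \<and>
     (\<forall>x\<in>carrier G0. act x \<in> iso G1 G1) \<and>
     (\<forall>a\<in>carrier G1. act \<one>\<^bsub>G0\<^esub> a = a) \<and>
     (\<forall>x\<in>carrier G0. \<forall>y\<in>carrier G0. \<forall>a\<in>carrier G1.
        act (x \<otimes>\<^bsub>G0\<^esub> y) a = act x (act y a)) \<and>
     (\<forall>x\<in>carrier G0. \<forall>a\<in>carrier G1.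
        bd (act x a) = x \<otimes>\<^bsub>G0\<^esub> bd a \<otimes>\<^bsub>G0\<^esub> inv\<^bsub>G0\<^esub> x) \<and>
     (\<forall>a\<in>carrier G1. \<forall>b\<in>carrier G1.
        act (bd b) a = b \<otimes>\<^bsub>G1\<^esub> a \<otimes>\<^bsub>G1\<^esub> inv\<^bsub>G1\<^esub> b)"

definition commutator :: "('b, 'd) monoid_scheme \<Rightarrow> 'b \<Rightarrow> 'b \<Rightarrow> 'b" where
  "commutator G x t = x \<otimes>\<^bsub>G\<^esub> t \<otimes>\<^bsub>G\<^esub> inv\<^bsub>G\<^esub> x \<otimes>\<^bsub>G\<^esub> inv\<^bsub>G\<^esub> t"

definition Der ::
  "('a, 'c) monoid_scheme \<Rightarrow> ('b, 'd) monoid_scheme \<Rightarrow> ('a \<Rightarrow> 'b) \<Rightarrow> ('b \<Rightarrow> 'a \<Rightarrow> 'a)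
   \<Rightarrow> ('b \<times> ('b \<Rightarrow> 'a)) set" where
  "Der G1 G0 bd act = {(g, \<gamma>). g \<in> carrier G0 \<and> \<gamma> \<in> carrier G0 \<rightarrow>\<^sub>E carrier G1 \<and>
     (\<forall>s\<in>carrier G0. \<forall>t\<in>carrier G0. \<gamma> (s \<otimes>\<^bsub>G0\<^esub> t) = \<gamma> s \<otimes>\<^bsub>G1\<^esub> act s (\<gamma> t)) \<and>
     (\<forall>t\<in>carrier G0. bd (\<gamma> t) = commutator G0 g t)}"

definition DerGrp ::
  "('a, 'c) monoid_scheme \<Rightarrow> ('b, 'd) monoid_scheme \<Rightarrow> ('a \<Rightarrow> 'b) \<Rightarrow> ('b \<Rightarrow> 'a \<Rightarrow> 'a)
   \<Rightarrow> ('b \<times> ('b \<Rightarrow> 'a)) monoid" where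
  "DerGrp G1 G0 bd act =
     \<lparr> carrier = Der G1 G0 bd act,
       monoid.mult = (\<lambda>(g, \<gamma>) (g', \<gamma>'). (g \<otimes>\<^bsub>G0\<^esub> g',
                 \<lambda>t\<in>carrier G0. act g (\<gamma>' t) \<otimes>\<^bsub>G1\<^esub> \<gamma> t)),
       monoid.one = (\<one>\<^bsub>G0\<^esub>, \<lambda>t\<in>carrier G0. \<one>\<^bsub>G1\<^esub>) \<rparr>"

definition H0 ::
  "('a, 'c) monoid_scheme \<Rightarrow> ('b, 'd) monoid_scheme \<Rightarrow> ('a \<Rightarrow> 'b) \<Rightarrow> ('b \<Rightarrow> 'a \<Rightarrow> 'a) \<Rightarrow> 'a set" where
  "H0 G1 G0 bd act = {a \<in> carrier G1. bd a = \<one>\<^bsub>G0\<^esub> \<and> (\<forall>x\<in>carrier G0. act x a = a)}"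

definition der_rel ::
  "('a, 'c) monoid_scheme \<Rightarrow> ('b, 'd) monoid_scheme \<Rightarrow> ('a \<Rightarrow> 'b) \<Rightarrow> ('b \<Rightarrow> 'a \<Rightarrow> 'a)
   \<Rightarrow> (('b \<times> ('b \<Rightarrow> 'a)) \<times> ('b \<times> ('b \<Rightarrow> 'a))) set" where
  "der_rel G1 G0 bd act = {((g, \<gamma>), (g', \<gamma>')).
      (g, \<gamma>) \<in> Der G1 G0 bd act \<and> (g', \<gamma>') \<in> Der G1 G0 bd act \<and>
      (\<exists>a\<in>carrier G1. g' = inv\<^bsub>G0\<^esub> (bd a) \<otimes>\<^bsub>G0\<^esub> g \<and>
         (\<forall>t\<in>carrier G0. \<gamma>' t = inv\<^bsub>G1\<^esub> a \<otimes>\<^bsub>G1\<^esub> \<gamma> t \<otimes>\<^bsub>G1\<^esub> act t a))}"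

definition H1 ::
  "('a, 'c) monoid_scheme \<Rightarrow> ('b, 'd) monoid_scheme \<Rightarrow> ('a \<Rightarrow> 'b) \<Rightarrow> ('b \<Rightarrow> 'a \<Rightarrow> 'a)
   \<Rightarrow> ('b \<times> ('b \<Rightarrow> 'a)) set set" where
  "H1 G1 G0 bd act = Der G1 G0 bd act // der_rel G1 G0 bd act"

definition Z0 ::
  "('a, 'c) monoid_scheme \<Rightarrow> ('b, 'd) monoid_scheme \<Rightarrow> ('a \<Rightarrow> 'b) \<Rightarrow> ('b \<Rightarrow> 'a \<Rightarrow> 'a)
   \<Rightarrow> ('b \<times> ('b \<Rightarrow> 'a)) set" where
  "Z0 G1 G0 bd act = {(x, \<xi>) \<in> Der G1 G0 bd act.
      \<forall>a\<in>carrier G1. \<xi> (bd a) = act x a \<otimes>\<^bsub>G1\<^esub> inv\<^bsub>G1\<^esub> a}"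

definition Z0Grp ::
  "('a, 'c) monoid_scheme \<Rightarrow> ('b, 'd) monoid_scheme \<Rightarrow> ('a \<Rightarrow> 'b) \<Rightarrow> ('b \<Rightarrow> 'a \<Rightarrow> 'a)
   \<Rightarrow> ('b \<times> ('b \<Rightarrow> 'a)) monoid" where
  "Z0Grp G1 G0 bd act = (DerGrp G1 G0 bd act)\<lparr>carrier := Z0 G1 G0 bd act\<rparr>"

definition delta ::
  "('a, 'c) monoid_scheme \<Rightarrow> ('b, 'd) monoid_scheme \<Rightarrow> ('a \<Rightarrow> 'b) \<Rightarrow> ('b \<Rightarrow> 'a \<Rightarrow> 'a)
   \<Rightarrow> 'a \<Rightarrow> 'b \<times> ('b \<Rightarrow> 'a)" where
  "delta G1 G0 bd act c = (bd c, \<lambda>t\<in>carrier G0. c \<otimes>\<^bsub>G1\<^esub> inv\<^bsub>G1\<^esub> (act t c))"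

definition pi1 ::
  "('a, 'c) monoid_scheme \<Rightarrow> ('b, 'd) monoid_scheme \<Rightarrow> ('a \<Rightarrow> 'b) \<Rightarrow> ('b \<Rightarrow> 'a \<Rightarrow> 'a) \<Rightarrow> 'a set" where
  "pi1 G1 G0 bd act = kernel G1 (DerGrp G1 G0 bd act) (delta G1 G0 bd act)"

definition pi0 ::
  "('a, 'c) monoid_scheme \<Rightarrow> ('b, 'd) monoid_scheme \<Rightarrow> ('a \<Rightarrow> 'b) \<Rightarrow> ('b \<Rightarrow> 'a \<Rightarrow> 'a)
   \<Rightarrow> ('b \<times> ('b \<Rightarrow> 'a)) set set" where
  "pi0 G1 G0 bd act = rcosets\<^bsub>Z0Grp G1 G0 bd act\<^esub> (delta G1 G0 bd act ` carrier G1)"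

end

theory Submission
  imports Defs
begin

text \<open>
  Everything follows from one observation: the relation defining \<open>H\<^sup>1\<close> says exactly that
  \<open>(g', \<gamma>') = \<delta>(a\<inverse>) \<cdot> (g, \<gamma>)\<close> in the group \<open>Der\<close>, so the classes of \<open>H\<^sup>1\<close> are the right cosets
  of the subgroup \<open>Im \<delta>\<close>. Both rows are then the exact sequences of the homomorphism \<open>\<delta>\<close>,
  first into \<open>Der\<close> and then into its subgroup \<open>Z\<^sub>0\<close>, whose kernel is \<open>H\<^sup>0\<close>; and a coset of
  \<open>Im \<delta>\<close> in \<open>Z\<^sub>0\<close> is the same set of derivations as the corresponding coset in \<open>Der\<close>, which
  makes \<open>\<pi>\<^sub>0 \<rightarrow> H\<^sup>1\<close> injective.
\<close>

lemma restrict_eqI: "\<gamma> \<in> extensional A \<Longrightarrow> (\<And>t. t \<in> A \<Longrightarrow> f t = \<gamma> t) \<Longrightarrow> restrict f A = \<gamma>"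
  by (metis extensional_restrict restrict_ext)

locale xmod = G1: group G1 + G0: group G0
  for G1 :: "('a, 'c) monoid_scheme" and G0 :: "('b, 'd) monoid_scheme" +
  fixes bd :: "'a \<Rightarrow> 'b" and act :: "'b \<Rightarrow> 'a \<Rightarrow> 'a"
  assumes bd_hom: "bd \<in> hom G1 G0"
    and act_iso: "x \<in> carrier G0 \<Longrightarrow> act x \<in> iso G1 G1"
    and act_one [simp]: "a \<in> carrier G1 \<Longrightarrow> act \<one>\<^bsub>G0\<^esub> a = a"
    and act_act: "x \<in> carrier G0 \<Longrightarrow> y \<in> carrier G0 \<Longrightarrow> a \<in> carrier G1 \<Longrightarrow>
        act (x \<otimes>\<^bsub>G0\<^esub> y) a = act x (act y a)"
    and bd_act [simp]: "x \<in> carrier G0 \<Longrightarrow> a \<in> carrier G1 \<Longrightarrow>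
        bd (act x a) = x \<otimes>\<^bsub>G0\<^esub> bd a \<otimes>\<^bsub>G0\<^esub> inv\<^bsub>G0\<^esub> x"
    and act_bd: "a \<in> carrier G1 \<Longrightarrow> b \<in> carrier G1 \<Longrightarrow>
        act (bd b) a = b \<otimes>\<^bsub>G1\<^esub> a \<otimes>\<^bsub>G1\<^esub> inv\<^bsub>G1\<^esub> b"

lemma crossed_module_imp_xmod: "crossed_module G1 G0 bd act \<Longrightarrow> xmod G1 G0 bd act"
  unfolding crossed_module_def xmod_def xmod_axioms_def by blast

context group
begin

lemma inv_mult_cancel_left [simp]: "x \<in> carrier G \<Longrightarrow> y \<in> carrier G \<Longrightarrow> inv x \<otimes> (x \<otimes> y) = y"
  by (simp add: m_assoc[symmetric])

lemma mult_inv_cancel_left [simp]: "x \<in> carrier G \<Longrightarrow> y \<in> carrier G \<Longrightarrow> x \<otimes> (inv x \<otimes> y) = y"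
  by (simp add: m_assoc[symmetric])

end

context xmod
begin

sublocale bd: group_hom G1 G0 bd
  by (simp add: G0.group_axioms G1.group_axioms bd_hom group_hom.intro group_hom_axioms.intro)

lemma act_group_hom: "x \<in> carrier G0 \<Longrightarrow> group_hom G1 G1 (act x)"
  using act_iso by (simp add: G1.group_axioms group_hom.intro group_hom_axioms.intro iso_def)

lemma act_closed [simp]: "x \<in> carrier G0 \<Longrightarrow> a \<in> carrier G1 \<Longrightarrow> act x a \<in> carrier G1"
  using act_iso by (auto simp: iso_def hom_def)

lemma act_mult [simp]: "x \<in> carrier G0 \<Longrightarrow> a \<in> carrier G1 \<Longrightarrow> b \<in> carrier G1 \<Longrightarrow>
    act x (a \<otimes>\<^bsub>G1\<^esub> b) = act x a \<otimes>\<^bsub>G1\<^esub> act x b"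
  using act_iso by (auto simp: iso_def hom_def)

lemma act_inv [simp]: "x \<in> carrier G0 \<Longrightarrow> a \<in> carrier G1 \<Longrightarrow> act x (inv\<^bsub>G1\<^esub> a) = inv\<^bsub>G1\<^esub> act x a"
  using group_hom.hom_inv[OF act_group_hom] by blast

lemma act_one_right [simp]: "x \<in> carrier G0 \<Longrightarrow> act x \<one>\<^bsub>G1\<^esub> = \<one>\<^bsub>G1\<^esub>"
  using group_hom.hom_one[OF act_group_hom] by blast

lemma act_inv_bd: "a \<in> carrier G1 \<Longrightarrow> y \<in> carrier G1 \<Longrightarrow>
    act (inv\<^bsub>G0\<^esub> bd a) y = inv\<^bsub>G1\<^esub> a \<otimes>\<^bsub>G1\<^esub> y \<otimes>\<^bsub>G1\<^esub> a"
  using act_bd[of y "inv\<^bsub>G1\<^esub> a"] by simp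

lemma act_cancel:
  "x \<in> carrier G0 \<Longrightarrow> a \<in> carrier G1 \<Longrightarrow> b \<in> carrier G1 \<Longrightarrow> act x a = act x b \<longleftrightarrow> a = b"
  using act_iso by (auto simp: iso_def bij_betw_def inj_on_def)

abbreviation "DerG \<equiv> DerGrp G1 G0 bd act"
abbreviation "Z0G \<equiv> Z0Grp G1 G0 bd act"
abbreviation "cobound \<equiv> delta G1 G0 bd act"
abbreviation "coboundaries \<equiv> cobound ` carrier G1"
abbreviation "rel \<equiv> der_rel G1 G0 bd act"

lemma DerD:
  assumes "(g, \<gamma>) \<in> Der G1 G0 bd act"
  shows "g \<in> carrier G0" and "\<And>t. t \<in> carrier G0 \<Longrightarrow> \<gamma> t \<in> carrier G1"
    and "\<gamma> \<in> extensional (carrier G0)"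
    and "\<And>s t. s \<in> carrier G0 \<Longrightarrow> t \<in> carrier G0 \<Longrightarrow> \<gamma> (s \<otimes>\<^bsub>G0\<^esub> t) = \<gamma> s \<otimes>\<^bsub>G1\<^esub> act s (\<gamma> t)"
    and "\<And>t. t \<in> carrier G0 \<Longrightarrow> bd (\<gamma> t) = commutator G0 g t"
  using assms unfolding Der_def by (auto simp: PiE_iff)

lemma DerGrp_carrier [simp]: "carrier DerG = Der G1 G0 bd act"
  by (simp add: DerGrp_def)

lemma DerGrp_mult [simp]:
  "(g, \<gamma>) \<otimes>\<^bsub>DerG\<^esub> (g', \<gamma>') = (g \<otimes>\<^bsub>G0\<^esub> g', \<lambda>t\<in>carrier G0. act g (\<gamma>' t) \<otimes>\<^bsub>G1\<^esub> \<gamma> t)"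
  by (simp add: DerGrp_def)

lemma DerGrp_one: "\<one>\<^bsub>DerG\<^esub> = (\<one>\<^bsub>G0\<^esub>, \<lambda>t\<in>carrier G0. \<one>\<^bsub>G1\<^esub>)"
  by (simp add: DerGrp_def)

text \<open>Since \<open>\<partial>\<gamma>(s) = [g, s]\<close>, the Peiffer identity turns the action of \<open>g s\<close> into the action
  of \<open>s g\<close> conjugated by \<open>\<gamma>(s)\<close>.\<close>
lemma der_act_conj:
  assumes "(g, \<gamma>) \<in> Der G1 G0 bd act" "s \<in> carrier G0" "y \<in> carrier G1"
  shows "act (g \<otimes>\<^bsub>G0\<^esub> s) y = \<gamma> s \<otimes>\<^bsub>G1\<^esub> act (s \<otimes>\<^bsub>G0\<^esub> g) y \<otimes>\<^bsub>G1\<^esub> inv\<^bsub>G1\<^esub> \<gamma> s"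
proof -
  note D = DerD[OF assms(1)]
  have "act (g \<otimes>\<^bsub>G0\<^esub> s) y = act (bd (\<gamma> s)) (act (s \<otimes>\<^bsub>G0\<^esub> g) y)"
    using D assms by (simp add: commutator_def G0.m_assoc act_act[symmetric])
  also have "\<dots> = \<gamma> s \<otimes>\<^bsub>G1\<^esub> act (s \<otimes>\<^bsub>G0\<^esub> g) y \<otimes>\<^bsub>G1\<^esub> inv\<^bsub>G1\<^esub> \<gamma> s"
    using D assms by (intro act_bd) auto
  finally show ?thesis .
qed

lemma der_mult_closed:
  assumes "(g, \<gamma>) \<in> Der G1 G0 bd act" "(g', \<gamma>') \<in> Der G1 G0 bd act"
  shows "(g, \<gamma>) \<otimes>\<^bsub>DerG\<^esub> (g', \<gamma>') \<in> Der G1 G0 bd act"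
proof -
  note D = DerD[OF assms(1)] and D' = DerD[OF assms(2)]
  have cocycle: "act g (\<gamma>' (s \<otimes>\<^bsub>G0\<^esub> t)) \<otimes>\<^bsub>G1\<^esub> \<gamma> (s \<otimes>\<^bsub>G0\<^esub> t) =
      (act g (\<gamma>' s) \<otimes>\<^bsub>G1\<^esub> \<gamma> s) \<otimes>\<^bsub>G1\<^esub> act s (act g (\<gamma>' t) \<otimes>\<^bsub>G1\<^esub> \<gamma> t)"
    if "s \<in> carrier G0" "t \<in> carrier G0" for s t
  proof -
    have "act g (\<gamma>' (s \<otimes>\<^bsub>G0\<^esub> t)) \<otimes>\<^bsub>G1\<^esub> \<gamma> (s \<otimes>\<^bsub>G0\<^esub> t)
        = act g (\<gamma>' s) \<otimes>\<^bsub>G1\<^esub> (act (g \<otimes>\<^bsub>G0\<^esub> s) (\<gamma>' t) \<otimes>\<^bsub>G1\<^esub> \<gamma> s) \<otimes>\<^bsub>G1\<^esub> act s (\<gamma> t)"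
      using that D D' by (simp add: act_act G1.m_assoc)
    also have "\<dots> = act g (\<gamma>' s) \<otimes>\<^bsub>G1\<^esub> (\<gamma> s \<otimes>\<^bsub>G1\<^esub> act (s \<otimes>\<^bsub>G0\<^esub> g) (\<gamma>' t)) \<otimes>\<^bsub>G1\<^esub> act s (\<gamma> t)"
      using that D D' by (simp add: der_act_conj[OF assms(1)] G1.m_assoc)
    also have "\<dots> = (act g (\<gamma>' s) \<otimes>\<^bsub>G1\<^esub> \<gamma> s) \<otimes>\<^bsub>G1\<^esub> act s (act g (\<gamma>' t) \<otimes>\<^bsub>G1\<^esub> \<gamma> t)"
      using that D D' by (simp add: act_act G1.m_assoc)
    finally show ?thesis .
  qed
  have "bd (act g (\<gamma>' t) \<otimes>\<^bsub>G1\<^esub> \<gamma> t) = commutator G0 (g \<otimes>\<^bsub>G0\<^esub> g') t" if "t \<in> carrier G0" for t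
    using that D D' by (simp add: commutator_def G0.m_assoc G0.inv_mult_group)
  with cocycle show ?thesis
    unfolding Der_def using D D' by auto
qed

definition der_inv :: "'b \<times> ('b \<Rightarrow> 'a) \<Rightarrow> 'b \<times> ('b \<Rightarrow> 'a)" where
  "der_inv = (\<lambda>(g, \<gamma>). (inv\<^bsub>G0\<^esub> g, \<lambda>t\<in>carrier G0. act (inv\<^bsub>G0\<^esub> g) (inv\<^bsub>G1\<^esub> (\<gamma> t))))"

lemma der_one_mem: "\<one>\<^bsub>DerG\<^esub> \<in> Der G1 G0 bd act"
  unfolding DerGrp_one Der_def by (auto simp: commutator_def)

lemma der_inv_mem:
  assumes "(g, \<gamma>) \<in> Der G1 G0 bd act"
  shows "der_inv (g, \<gamma>) \<in> Der G1 G0 bd act"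
proof -
  note D = DerD[OF assms]
  define \<gamma>' where "\<gamma>' = (\<lambda>t\<in>carrier G0. act (inv\<^bsub>G0\<^esub> g) (inv\<^bsub>G1\<^esub> (\<gamma> t)))"
  have act_g_\<gamma>': "act g (\<gamma>' t) = inv\<^bsub>G1\<^esub> (\<gamma> t)" if "t \<in> carrier G0" for t
    using that D by (simp add: \<gamma>'_def act_act[symmetric])
  have \<gamma>'_closed: "\<gamma>' t \<in> carrier G1" if "t \<in> carrier G0" for t
    using that D by (simp add: \<gamma>'_def)
  have cocycle: "\<gamma>' (s \<otimes>\<^bsub>G0\<^esub> t) = \<gamma>' s \<otimes>\<^bsub>G1\<^esub> act s (\<gamma>' t)"
    if st: "s \<in> carrier G0" "t \<in> carrier G0" for s t
  proof -
    have "act g (\<gamma>' s \<otimes>\<^bsub>G1\<^esub> act s (\<gamma>' t)) = inv\<^bsub>G1\<^esub> (\<gamma> s) \<otimes>\<^bsub>G1\<^esub> act (g \<otimes>\<^bsub>G0\<^esub> s) (\<gamma>' t)"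
      using st D \<gamma>'_closed by (simp add: act_g_\<gamma>' act_act)
    also have "\<dots> = inv\<^bsub>G1\<^esub> (\<gamma> s) \<otimes>\<^bsub>G1\<^esub> (\<gamma> s \<otimes>\<^bsub>G1\<^esub> act s (act g (\<gamma>' t)) \<otimes>\<^bsub>G1\<^esub> inv\<^bsub>G1\<^esub> \<gamma> s)"
      using st D \<gamma>'_closed by (simp add: der_act_conj[OF assms st(1)] act_act[OF st(1) D(1)])
    also have "\<dots> = inv\<^bsub>G1\<^esub> (\<gamma> s \<otimes>\<^bsub>G1\<^esub> act s (\<gamma> t))"
      using st D by (simp add: act_g_\<gamma>' G1.m_assoc[symmetric] G1.inv_mult_group)
    also have "\<dots> = act g (\<gamma>' (s \<otimes>\<^bsub>G0\<^esub> t))"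
      using st D by (simp add: act_g_\<gamma>')
    finally have eq: "act g (\<gamma>' s \<otimes>\<^bsub>G1\<^esub> act s (\<gamma>' t)) = act g (\<gamma>' (s \<otimes>\<^bsub>G0\<^esub> t))" .
    have "\<gamma>' s \<otimes>\<^bsub>G1\<^esub> act s (\<gamma>' t) \<in> carrier G1" "\<gamma>' (s \<otimes>\<^bsub>G0\<^esub> t) \<in> carrier G1"
      using st \<gamma>'_closed by auto
    from iffD1[OF act_cancel[OF D(1) this] eq] show ?thesis
      by (rule sym)
  qed
  have "bd (\<gamma>' t) = commutator G0 (inv\<^bsub>G0\<^esub> g) t" if "t \<in> carrier G0" for t
    using that D by (simp add: \<gamma>'_def commutator_def G0.m_assoc G0.inv_mult_group)
  moreover have "der_inv (g, \<gamma>) = (inv\<^bsub>G0\<^esub> g, \<gamma>')"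
    by (simp add: der_inv_def \<gamma>'_def)
  moreover have "\<gamma>' \<in> carrier G0 \<rightarrow>\<^sub>E carrier G1"
    using \<gamma>'_closed by (auto simp: \<gamma>'_def)
  ultimately show ?thesis
    using cocycle D(1) unfolding Der_def by auto
qed

lemma der_inv_l_inv:
  assumes "(g, \<gamma>) \<in> Der G1 G0 bd act"
  shows "der_inv (g, \<gamma>) \<otimes>\<^bsub>DerG\<^esub> (g, \<gamma>) = \<one>\<^bsub>DerG\<^esub>"
  using DerD[OF assms] by (auto simp: der_inv_def DerGrp_one intro!: restrict_ext)

lemma group_DerGrp: "group DerG"
proof (rule groupI)
  fix x y assume "x \<in> carrier DerG" "y \<in> carrier DerG"
  then show "x \<otimes>\<^bsub>DerG\<^esub> y \<in> carrier DerG"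
    by (cases x, cases y) (simp add: der_mult_closed del: DerGrp_mult)
next
  show "\<one>\<^bsub>DerG\<^esub> \<in> carrier DerG"
    by (simp add: der_one_mem)
next
  fix x y z assume xyz: "x \<in> carrier DerG" "y \<in> carrier DerG" "z \<in> carrier DerG"
  obtain g \<gamma> g' \<gamma>' g'' \<gamma>'' where eq: "x = (g, \<gamma>)" "y = (g', \<gamma>')" "z = (g'', \<gamma>'')"
    by (cases x, cases y, cases z)
  note D = DerD[of g \<gamma>] DerD[of g' \<gamma>'] DerD[of g'' \<gamma>'']
  show "x \<otimes>\<^bsub>DerG\<^esub> y \<otimes>\<^bsub>DerG\<^esub> z = x \<otimes>\<^bsub>DerG\<^esub> (y \<otimes>\<^bsub>DerG\<^esub> z)"
    using xyz D unfolding eq by (auto simp: G0.m_assoc G1.m_assoc act_act intro!: restrict_ext)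
next
  fix x assume "x \<in> carrier DerG"
  then show "\<one>\<^bsub>DerG\<^esub> \<otimes>\<^bsub>DerG\<^esub> x = x"
    by (cases x) (auto simp: DerGrp_one DerD intro!: restrict_eqI)
next
  fix x assume "x \<in> carrier DerG"
  then show "\<exists>y\<in>carrier DerG. y \<otimes>\<^bsub>DerG\<^esub> x = \<one>\<^bsub>DerG\<^esub>"
    by (cases x) (auto intro!: bexI[of _ "der_inv x"] der_inv_mem der_inv_l_inv)
qed

sublocale Der: group DerG
  by (rule group_DerGrp)

lemma DerGrp_inv: "x \<in> carrier DerG \<Longrightarrow> inv\<^bsub>DerG\<^esub> x = der_inv x"
  using Der.inv_equality der_inv_l_inv der_inv_mem by (cases x) auto

lemma Z0_subset_Der: "Z0 G1 G0 bd act \<subseteq> Der G1 G0 bd act"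
  by (auto simp: Z0_def)

lemma delta_mem_Z0: "c \<in> carrier G1 \<Longrightarrow> cobound c \<in> Z0 G1 G0 bd act"
  unfolding delta_def Z0_def Der_def
  by (auto simp: act_act act_bd G1.m_assoc G1.inv_mult_group commutator_def G0.inv_mult_group G0.m_assoc)

lemma delta_mem_Der: "c \<in> carrier G1 \<Longrightarrow> cobound c \<in> Der G1 G0 bd act"
  using delta_mem_Z0 Z0_subset_Der by blast

lemma subgroup_Z0: "subgroup (Z0 G1 G0 bd act) DerG"
proof (rule Der.subgroupI)
  show "Z0 G1 G0 bd act \<subseteq> carrier DerG"
    using Z0_subset_Der by simp
  show "Z0 G1 G0 bd act \<noteq> {}"
    using delta_mem_Z0[OF G1.one_closed] by blast
next
  fix x assume "x \<in> Z0 G1 G0 bd act"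
  then obtain g \<xi> where x: "x = (g, \<xi>)" "(g, \<xi>) \<in> Der G1 G0 bd act"
    and \<xi>_bd: "\<And>a. a \<in> carrier G1 \<Longrightarrow> \<xi> (bd a) = act g a \<otimes>\<^bsub>G1\<^esub> inv\<^bsub>G1\<^esub> a"
    by (auto simp: Z0_def)
  note D = DerD[OF x(2)]
  have "act (inv\<^bsub>G0\<^esub> g) (inv\<^bsub>G1\<^esub> (\<xi> (bd a))) = act (inv\<^bsub>G0\<^esub> g) a \<otimes>\<^bsub>G1\<^esub> inv\<^bsub>G1\<^esub> a"
    if "a \<in> carrier G1" for a
    using that D by (simp add: \<xi>_bd G1.inv_mult_group act_act[symmetric])
  then show "inv\<^bsub>DerG\<^esub> x \<in> Z0 G1 G0 bd act"
    using der_inv_mem[OF x(2)] x by (auto simp: DerGrp_inv Z0_def der_inv_def)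
next
  fix x y assume "x \<in> Z0 G1 G0 bd act" "y \<in> Z0 G1 G0 bd act"
  then obtain g \<xi> g' \<xi>' where xy: "x = (g, \<xi>)" "y = (g', \<xi>')"
    "(g, \<xi>) \<in> Der G1 G0 bd act" "(g', \<xi>') \<in> Der G1 G0 bd act"
    and \<xi>_bd: "\<And>a. a \<in> carrier G1 \<Longrightarrow> \<xi> (bd a) = act g a \<otimes>\<^bsub>G1\<^esub> inv\<^bsub>G1\<^esub> a"
    and \<xi>'_bd: "\<And>a. a \<in> carrier G1 \<Longrightarrow> \<xi>' (bd a) = act g' a \<otimes>\<^bsub>G1\<^esub> inv\<^bsub>G1\<^esub> a"
    by (auto simp: Z0_def)
  note D = DerD[OF xy(3)] DerD[OF xy(4)]
  have "act g (\<xi>' (bd a)) \<otimes>\<^bsub>G1\<^esub> \<xi> (bd a) = act (g \<otimes>\<^bsub>G0\<^esub> g') a \<otimes>\<^bsub>G1\<^esub> inv\<^bsub>G1\<^esub> a"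
    if "a \<in> carrier G1" for a
    using that D by (simp add: \<xi>_bd \<xi>'_bd G1.m_assoc act_act)
  then show "x \<otimes>\<^bsub>DerG\<^esub> y \<in> Z0 G1 G0 bd act"
    using der_mult_closed[OF xy(3,4)] xy(1,2) D by (auto simp: Z0_def)
qed

lemma Z0Grp_carrier [simp]: "carrier Z0G = Z0 G1 G0 bd act"
  by (simp add: Z0Grp_def)

lemma Z0Grp_one [simp]: "\<one>\<^bsub>Z0G\<^esub> = \<one>\<^bsub>DerG\<^esub>"
  by (simp add: Z0Grp_def)

lemma r_coset_Z0Grp: "H #>\<^bsub>Z0G\<^esub> z = H #>\<^bsub>DerG\<^esub> z"
  by (simp add: r_coset_def Z0Grp_def)

lemma delta_hom: "cobound \<in> hom G1 DerG"
proof (rule homI)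
  fix c c' assume "c \<in> carrier G1" "c' \<in> carrier G1"
  then show "cobound (c \<otimes>\<^bsub>G1\<^esub> c') = cobound c \<otimes>\<^bsub>DerG\<^esub> cobound c'"
    by (auto simp: delta_def act_bd G1.m_assoc G1.inv_mult_group intro!: restrict_ext)
qed (simp add: delta_mem_Der)

sublocale cobound: group_hom G1 DerG cobound
  by (simp add: G1.group_axioms group_DerGrp delta_hom group_hom.intro group_hom_axioms.intro)

lemma delta_hom_Z0Grp: "cobound \<in> hom G1 Z0G"
  using delta_hom delta_mem_Z0 by (auto simp: hom_def Z0Grp_def)

lemma delta_eq_one_iff:
  assumes "c \<in> carrier G1"
  shows "cobound c = \<one>\<^bsub>DerG\<^esub> \<longleftrightarrow> c \<in> H0 G1 G0 bd act"
proof -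
  have "c \<otimes>\<^bsub>G1\<^esub> inv\<^bsub>G1\<^esub> act t c = \<one>\<^bsub>G1\<^esub> \<longleftrightarrow> act t c = c" if "t \<in> carrier G0" for t
    using that assms G1.inv_solve_right'[of "\<one>\<^bsub>G1\<^esub>" c "act t c"] by auto
  then show ?thesis
    using assms by (auto simp: delta_def DerGrp_one H0_def restrict_def fun_eq_iff)
qed

lemma kernel_delta: "kernel G1 DerG cobound = H0 G1 G0 bd act"
  using delta_eq_one_iff by (auto simp: kernel_def H0_def)

lemma subgroup_coboundaries: "subgroup coboundaries DerG"
  by (rule cobound.img_is_subgroup)

lemma delta_inv_mult:
  assumes "(g, \<gamma>) \<in> Der G1 G0 bd act" "a \<in> carrier G1"
  shows "inv\<^bsub>DerG\<^esub> cobound a \<otimes>\<^bsub>DerG\<^esub> (g, \<gamma>) =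
    (inv\<^bsub>G0\<^esub> bd a \<otimes>\<^bsub>G0\<^esub> g, \<lambda>t\<in>carrier G0. inv\<^bsub>G1\<^esub> a \<otimes>\<^bsub>G1\<^esub> \<gamma> t \<otimes>\<^bsub>G1\<^esub> act t a)"
proof -
  have "inv\<^bsub>DerG\<^esub> cobound a = cobound (inv\<^bsub>G1\<^esub> a)"
    using assms by simp
  then show ?thesis
    using assms DerD[OF assms(1)]
    by (auto simp: delta_def act_inv_bd G1.m_assoc intro!: restrict_ext)
qed

lemma rcos_coboundaries_iff:
  "z' \<in> coboundaries #>\<^bsub>DerG\<^esub> z \<longleftrightarrow> (\<exists>a\<in>carrier G1. z' = inv\<^bsub>DerG\<^esub> cobound a \<otimes>\<^bsub>DerG\<^esub> z)"
proof
  assume "z' \<in> coboundaries #>\<^bsub>DerG\<^esub> z"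
  then obtain c where "c \<in> carrier G1" "z' = cobound c \<otimes>\<^bsub>DerG\<^esub> z"
    by (auto simp: r_coset_def simp del: DerGrp_mult)
  then show "\<exists>a\<in>carrier G1. z' = inv\<^bsub>DerG\<^esub> cobound a \<otimes>\<^bsub>DerG\<^esub> z"
    by (intro bexI[of _ "inv\<^bsub>G1\<^esub> c"]) (simp_all add: delta_mem_Der del: DerGrp_mult)
next
  assume "\<exists>a\<in>carrier G1. z' = inv\<^bsub>DerG\<^esub> cobound a \<otimes>\<^bsub>DerG\<^esub> z"
  then show "z' \<in> coboundaries #>\<^bsub>DerG\<^esub> z"
    by (force simp: r_coset_def cobound.hom_inv[symmetric] simp del: DerGrp_mult cobound.hom_inv)
qed

lemma der_rel_iff_rcos:
  "(z, z') \<in> rel \<longleftrightarrow>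
    z \<in> Der G1 G0 bd act \<and> z' \<in> Der G1 G0 bd act \<and> z' \<in> coboundaries #>\<^bsub>DerG\<^esub> z"
proof (cases z, cases z')
  fix g \<gamma> g' \<gamma>' assume z: "z = (g, \<gamma>)" "z' = (g', \<gamma>')"
  have "(g', \<gamma>') = inv\<^bsub>DerG\<^esub> cobound a \<otimes>\<^bsub>DerG\<^esub> (g, \<gamma>) \<longleftrightarrow>
      g' = inv\<^bsub>G0\<^esub> bd a \<otimes>\<^bsub>G0\<^esub> g \<and> (\<forall>t\<in>carrier G0. \<gamma>' t = inv\<^bsub>G1\<^esub> a \<otimes>\<^bsub>G1\<^esub> \<gamma> t \<otimes>\<^bsub>G1\<^esub> act t a)"
    if "(g, \<gamma>) \<in> Der G1 G0 bd act" "(g', \<gamma>') \<in> Der G1 G0 bd act" "a \<in> carrier G1" for a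
    using that DerD[OF that(2)] by (auto simp: delta_inv_mult intro: restrict_eqI[symmetric])
  then show ?thesis
    unfolding z rcos_coboundaries_iff by (auto simp: der_rel_def simp del: DerGrp_mult)
qed

lemma der_rel_eq:
  "rel = {(z, z'). z \<in> Der G1 G0 bd act \<and> z' \<in> Der G1 G0 bd act \<and> coboundaries #>\<^bsub>DerG\<^esub> z = coboundaries #>\<^bsub>DerG\<^esub> z'}"
  using Der.repr_independence[OF _ _ subgroup_coboundaries] Der.repr_independenceD[OF subgroup_coboundaries]
  by (auto simp: der_rel_iff_rcos)

lemma equiv_der_rel: "equiv (carrier DerG) rel"
  by (rule equivI) (auto simp: der_rel_eq refl_on_def sym_def trans_def)

lemma rcos_coboundaries_eq_self_iff: "z \<in> Der G1 G0 bd act \<Longrightarrow> coboundaries #>\<^bsub>DerG\<^esub> z = coboundaries \<longleftrightarrow> z \<in> coboundaries"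
  using Der.coset_join1[of coboundaries z] Der.coset_join2[of z coboundaries] subgroup_coboundaries by auto

lemma der_rel_class_eq_one:
  "{d \<in> carrier DerG. rel `` {d} = rel `` {\<one>\<^bsub>DerG\<^esub>}} = coboundaries"
proof -
  have "rel `` {d} = rel `` {\<one>\<^bsub>DerG\<^esub>} \<longleftrightarrow> d \<in> coboundaries" if "d \<in> Der G1 G0 bd act" for d
  proof -
    have "rel `` {d} = rel `` {\<one>\<^bsub>DerG\<^esub>} \<longleftrightarrow> (d, \<one>\<^bsub>DerG\<^esub>) \<in> rel"
      using that der_one_mem by (intro eq_equiv_class_iff[OF equiv_der_rel]) simp_all
    also have "\<dots> \<longleftrightarrow> coboundaries #>\<^bsub>DerG\<^esub> d = coboundaries #>\<^bsub>DerG\<^esub> \<one>\<^bsub>DerG\<^esub>"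
      using that der_one_mem by (simp add: der_rel_eq)
    also have "\<dots> \<longleftrightarrow> d \<in> coboundaries"
      using that rcos_coboundaries_eq_self_iff Der.coset_mult_one subgroup.subset[OF subgroup_coboundaries]
      by simp
    finally show ?thesis .
  qed
  moreover have "coboundaries \<subseteq> Der G1 G0 bd act"
    using delta_mem_Der by (simp add: image_subset_iff)
  ultimately show ?thesis
    by (simp only: DerGrp_carrier) blast
qed

lemma rcos_Z0Grp_coboundaries_eq_one:
  "{z \<in> carrier Z0G. coboundaries #>\<^bsub>Z0G\<^esub> z = coboundaries #>\<^bsub>Z0G\<^esub> \<one>\<^bsub>Z0G\<^esub>} = coboundaries"
proof -
  have "coboundaries \<subseteq> carrier Z0G"
    using delta_mem_Z0 by (simp add: image_subset_iff)
  moreover have "coboundaries #>\<^bsub>Z0G\<^esub> \<one>\<^bsub>Z0G\<^esub> = coboundaries"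
    using Der.coset_mult_one subgroup.subset[OF subgroup_coboundaries] by (simp add: r_coset_Z0Grp)
  ultimately show ?thesis
    using rcos_coboundaries_eq_self_iff Z0_subset_Der by (simp only: Z0Grp_carrier r_coset_Z0Grp) blast
qed

lemma der_rel_Image_rcos:
  assumes "z \<in> Der G1 G0 bd act"
  shows "rel `` (coboundaries #>\<^bsub>DerG\<^esub> z) = rel `` {z}"
proof -
  have "rel `` {w} = rel `` {z}" if "w \<in> coboundaries #>\<^bsub>DerG\<^esub> z" for w
  proof -
    have "w \<in> Der G1 G0 bd act"
      using that assms Der.r_coset_subset_G[of coboundaries z] subgroup.subset[OF subgroup_coboundaries] by auto
    then show ?thesis
      using that assms by (intro equiv_class_eq[OF equiv_der_rel, symmetric]) (simp add: der_rel_iff_rcos)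
  qed
  moreover have "z \<in> coboundaries #>\<^bsub>DerG\<^esub> z"
    using assms Der.rcos_self[OF _ subgroup_coboundaries] by simp
  ultimately show ?thesis
    by blast
qed

lemma der_rel_Image_rcos_Z0Grp:
  "z \<in> carrier Z0G \<Longrightarrow> rel `` (coboundaries #>\<^bsub>Z0G\<^esub> z) = rel `` {z}"
  by (simp add: r_coset_Z0Grp der_rel_Image_rcos subsetD[OF Z0_subset_Der])

lemma der_rel_Image_pi0_subset_H1: "(\<lambda>C. rel `` C) ` pi0 G1 G0 bd act \<subseteq> H1 G1 G0 bd act"
proof
  fix Y assume "Y \<in> (\<lambda>C. rel `` C) ` pi0 G1 G0 bd act"
  then obtain z where "z \<in> carrier Z0G" "Y = rel `` {z}"
    using der_rel_Image_rcos_Z0Grp unfolding pi0_def RCOSETS_def by blast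
  then show "Y \<in> H1 G1 G0 bd act"
    unfolding H1_def using Z0_subset_Der by (auto intro: quotientI)
qed

lemma inj_on_der_rel_Image: "inj_on (\<lambda>C. rel `` C) (pi0 G1 G0 bd act)"
proof (rule inj_onI)
  fix C C' assume "C \<in> pi0 G1 G0 bd act" "C' \<in> pi0 G1 G0 bd act" and eq: "rel `` C = rel `` C'"
  then obtain z z' where z: "z \<in> Der G1 G0 bd act" "z' \<in> Der G1 G0 bd act"
    and C: "C = coboundaries #>\<^bsub>DerG\<^esub> z" "C' = coboundaries #>\<^bsub>DerG\<^esub> z'"
    using Z0_subset_Der unfolding pi0_def RCOSETS_def r_coset_Z0Grp Z0Grp_carrier by blast
  have "(z, z') \<in> rel"
    using eq z by (simp add: C der_rel_Image_rcos eq_equiv_class_iff[OF equiv_der_rel])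
  then show "C = C'"
    by (simp add: C der_rel_eq)
qed

end

theorem lemma3p11:
  fixes G1 :: "('a, 'c) monoid_scheme" and G0 :: "('b, 'd) monoid_scheme"
    and bd :: "'a \<Rightarrow> 'b" and act :: "'b \<Rightarrow> 'a \<Rightarrow> 'a"
  assumes "crossed_module G1 G0 bd act"
  defines "D \<equiv> DerGrp G1 G0 bd act"
      and "\<delta> \<equiv> delta G1 G0 bd act"
      and "R \<equiv> der_rel G1 G0 bd act"
      and "Z \<equiv> Z0Grp G1 G0 bd act"
      and "Im\<delta> \<equiv> delta G1 G0 bd act ` carrier G1"
  shows
    \<comment> \<open>Der is a group and Z0 is a subgroup\<close>
    "group D \<and> subgroup (Z0 G1 G0 bd act) D
     \<comment> \<open>first row: 0 -> H0 -> G1 -> Der -> H1 -> 1 exact\<close>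
     \<and> H0 G1 G0 bd act \<subseteq> carrier G1
     \<and> \<delta> \<in> hom G1 D
     \<and> {c \<in> carrier G1. \<delta> c = \<one>\<^bsub>D\<^esub>} = H0 G1 G0 bd act
     \<and> equiv (carrier D) R
     \<and> {d \<in> carrier D. R `` {d} = R `` {\<one>\<^bsub>D\<^esub>}} = Im\<delta>
     \<and> (\<lambda>d. R `` {d}) ` carrier D = H1 G1 G0 bd act
     \<comment> \<open>second row: 0 -> pi1 -> G1 -> Z0 -> pi0 -> 1 exact\<close>
     \<and> pi1 G1 G0 bd act \<subseteq> carrier G1
     \<and> \<delta> \<in> hom G1 Z
     \<and> {c \<in> carrier G1. \<delta> c = \<one>\<^bsub>Z\<^esub>} = pi1 G1 G0 bd act
     \<and> {z \<in> carrier Z. Im\<delta> #>\<^bsub>Z\<^esub> z = Im\<delta> #>\<^bsub>Z\<^esub> \<one>\<^bsub>Z\<^esub>} = Im\<delta>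
     \<and> (\<lambda>z. Im\<delta> #>\<^bsub>Z\<^esub> z) ` carrier Z = pi0 G1 G0 bd act
     \<comment> \<open>vertical maps: isomorphism pi1 = H0 compatible with the identity of G1,
         inclusion Z0 into Der, and an injective map pi0 -> H1 making the square commute\<close>
     \<and> (\<exists>\<phi>. \<phi> \<in> iso (G1\<lparr>carrier := pi1 G1 G0 bd act\<rparr>) (G1\<lparr>carrier := H0 G1 G0 bd act\<rparr>)
            \<and> (\<forall>c \<in> pi1 G1 G0 bd act. \<phi> c = c))
     \<and> carrier Z \<subseteq> carrier D
     \<and> (\<forall>c \<in> carrier G1. \<delta> c \<in> carrier Z)
     \<and> (\<exists>\<psi>. inj_on \<psi> (pi0 G1 G0 bd act) \<and> \<psi> ` pi0 G1 G0 bd act \<subseteq> H1 G1 G0 bd act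
            \<and> (\<forall>z \<in> carrier Z. \<psi> (Im\<delta> #>\<^bsub>Z\<^esub> z) = R `` {z}))"
proof -
  interpret xmod G1 G0 bd act
    using assms(1) by (rule crossed_module_imp_xmod)
  have pi1_eq: "pi1 G1 G0 bd act = H0 G1 G0 bd act"
    by (simp add: pi1_def kernel_delta)
  show ?thesis
    unfolding D_def \<delta>_def R_def Z_def Im\<delta>_def
    apply (intro conjI)
    subgoal by (rule group_DerGrp)
    subgoal by (rule subgroup_Z0)
    subgoal by (auto simp: H0_def)
    subgoal by (rule delta_hom)
    subgoal using kernel_delta by (simp add: kernel_def)
    subgoal by (rule equiv_der_rel)
    subgoal by (rule der_rel_class_eq_one)
    subgoal by (auto simp: H1_def quotient_def)
    subgoal by (auto simp: pi1_eq H0_def)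
    subgoal by (rule delta_hom_Z0Grp)
    subgoal using kernel_delta by (simp add: pi1_eq kernel_def)
    subgoal by (rule rcos_Z0Grp_coboundaries_eq_one)
    subgoal by (auto simp: pi0_def RCOSETS_def)
    subgoal by (rule exI[of _ "\<lambda>c. c"]) (simp add: pi1_eq iso_def hom_def bij_betw_def)
    subgoal using Z0_subset_Der by simp
    subgoal using delta_mem_Z0 by simp
    subgoal
      by (rule exI[of _ "\<lambda>C. rel `` C"])
        (simp add: inj_on_der_rel_Image der_rel_Image_pi0_subset_H1 der_rel_Image_rcos_Z0Grp)
    done
qed

end
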